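(* Let $\alpha$ be a curve in $\mathbb{E}^n$ given by $\alpha(t)=\rho(t)y(t)$, where $\rho$ is an arbitrary positive function and $y$ is an arclength parameterized curve in the unit hypersphere $\mathbb{S}^{n-1}(1)=\{p\in\mathbb{E}^n:\langle p,p\rangle=1\}$. Then $\alpha$ is a rectifying curve (with respect to the origin, i.e. $\langle\alpha(t),N(t)\rangle=0$ for all $t$) if and only if $\rho(t)=\frac{a}{\cos(t+t_0)}$ for some $a\in\mathbb{R}\setminus\{0\}$ and $t_0\in\mathbb{R}$.
   Context: For a (regular, sufficiently differentiable) curve $\alpha$ in $\mathbb{E}^n$ with speed $v=\|\alpha'\|$, the Frenet frame $T,N,B_1,\dots,B_{n-2}$ is orthonormal with $T=\alpha'/v$ and satisfies $T'=v\kappa_1N$, $N'=v(-\kappa_1T+\kappa_2B_1)$, etc., with $\kappa_1>0$; in particular $N$ is the unit vector in the direction of $T'$. A curve $\alpha$ is a rectifying curve if the orthogonal complement of $N$ contains a fixed point at every parameter; here the fixed point is the origin, i.e. $\langle\alpha,N\rangle\equiv0$. *)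

theory Defs
  imports "HOL-Analysis.Analysis"
begin

fun vderiv_n :: "nat \<Rightarrow> (real \<Rightarrow> 'a::real_normed_vector) \<Rightarrow> real \<Rightarrow> 'a" where
  "vderiv_n 0 f = f"
| "vderiv_n (Suc k) f = (\<lambda>t. vector_derivative (vderiv_n k f) (at t))"

definition smooth_on :: "real set \<Rightarrow> (real \<Rightarrow> 'a::real_normed_vector) \<Rightarrow> bool" where
  "smooth_on I f \<longleftrightarrow> (\<forall>k. \<forall>t\<in>I. vderiv_n k f differentiable (at t))"

definition tangent :: "(real \<Rightarrow> 'a::real_normed_vector) \<Rightarrow> real \<Rightarrow> 'a" where
  "tangent \<alpha> t = sgn (vector_derivative \<alpha> (at t))"

definition normal :: "(real \<Rightarrow> 'a::real_normed_vector) \<Rightarrow> real \<Rightarrow> 'a" where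
  "normal \<alpha> t = sgn (vector_derivative (tangent \<alpha>) (at t))"

definition rectifying_on :: "real set \<Rightarrow> (real \<Rightarrow> 'a::real_inner) \<Rightarrow> bool" where
  "rectifying_on I \<alpha> \<longleftrightarrow> (\<forall>t\<in>I. inner (\<alpha> t) (normal \<alpha> t) = 0)"

end

theory Submission
  imports Defs
begin

(* For alpha = rho y one has alpha' = rho' y + rho y' with y orthogonal to y', so
   |alpha'| = sqrt (rho'^2 + rho^2) and the tangential component <alpha, T> is rho rho' / |alpha'|.
   Since <alpha, T>' = |alpha'| + <alpha, T'> and N is parallel to T', alpha is rectifying iff
   <alpha, T>' = |alpha'|, which works out to the ODE rho rho'' = rho^2 + 2 rho'^2.  For w = 1/rho
   this ODE reads w'' = -w, whose solutions are w = c cos (t + t0). *)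

lemma smooth_on_has_vector_derivative:
  assumes "smooth_on I f" "t \<in> I"
  shows "(vderiv_n k f has_vector_derivative vderiv_n (Suc k) f t) (at t)"
  using assms by (simp add: smooth_on_def vector_derivative_works)

lemma has_real_derivative_unique_on_open:
  assumes "open I" "t \<in> I" "\<And>s. s \<in> I \<Longrightarrow> f s = g s"
    and "(f has_real_derivative f') (at t)" "(g has_real_derivative g') (at t)"
  shows "f' = g'"
  using DERIV_unique has_field_derivative_transform_within_open assms by metis

lemma inner_derivative_eq_0_if_inner_self_constant:
  fixes y :: "real \<Rightarrow> 'a::real_inner"
  assumes "open I" "t \<in> I" "\<And>s. s \<in> I \<Longrightarrow> inner (y s) (y s) = c"
    and "(y has_vector_derivative y') (at t)"
  shows "inner (y t) y' = 0"
proof -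
  have "((\<lambda>s. inner (y s) (y s)) has_real_derivative inner (y t) y' + inner y' (y t)) (at t)"
    using bounded_bilinear.has_vector_derivative[OF bounded_bilinear_inner assms(4) assms(4)]
    by (simp add: has_real_derivative_iff_has_vector_derivative)
  then have "inner (y t) y' + inner y' (y t) = 0"
    using has_real_derivative_unique_on_open[OF assms(1,2), of "\<lambda>s. inner (y s) (y s)" "\<lambda>s. c"]
      assms(3) DERIV_const by blast
  then show ?thesis by (simp add: inner_commute)
qed

lemma differentiable_tangent:
  fixes \<alpha> :: "real \<Rightarrow> 'a::real_inner"
  assumes "open I" "t \<in> I" "\<And>s. s \<in> I \<Longrightarrow> (\<alpha> has_vector_derivative A s) (at s)"
    and "A differentiable (at t)" "A t \<noteq> 0"
  shows "tangent \<alpha> differentiable (at t)"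
proof -
  have "(\<lambda>s. inverse (norm (A s)) *\<^sub>R A s) differentiable (at t)"
    using assms(4,5) differentiable_compose[OF differentiable_norm_at assms(4)]
    by (intro derivative_intros) auto
  moreover have "tangent \<alpha> s = inverse (norm (A s)) *\<^sub>R A s" if "s \<in> I" for s
    using vector_derivative_at[OF assms(3)[OF that]] by (simp add: tangent_def sgn_div_norm)
  ultimately show ?thesis
    using has_derivative_transform_within_open[OF _ assms(1,2)] unfolding differentiable_def
    by (metis (no_types, lifting))
qed

lemma inner_normal_eq_0_iff:
  fixes \<alpha> :: "real \<Rightarrow> 'a::real_inner"
  assumes d\<alpha>: "(\<alpha> has_vector_derivative A) (at t)"
    and "tangent \<alpha> differentiable (at t)" and "vector_derivative (tangent \<alpha>) (at t) \<noteq> 0"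
  shows "inner (\<alpha> t) (normal \<alpha> t) = 0 \<longleftrightarrow>
    ((\<lambda>s. inner (\<alpha> s) (tangent \<alpha> s)) has_real_derivative norm A) (at t)"
proof -
  define T' where "T' = vector_derivative (tangent \<alpha>) (at t)"
  have dT: "(tangent \<alpha> has_vector_derivative T') (at t)"
    using assms(2) vector_derivative_works T'_def by blast
  have "((\<lambda>s. inner (\<alpha> s) (tangent \<alpha> s)) has_real_derivative
      inner A (tangent \<alpha> t) + inner (\<alpha> t) T') (at t)"
    using bounded_bilinear.has_vector_derivative[OF bounded_bilinear_inner d\<alpha> dT]
    by (simp add: has_real_derivative_iff_has_vector_derivative add.commute)
  moreover have "inner A (tangent \<alpha> t) = norm A"
    using vector_derivative_at[OF d\<alpha>]
    by (simp add: tangent_def sgn_div_norm inner_scaleR_right flip: power2_norm_eq_inner)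
      (simp add: power2_eq_square field_simps)
  moreover have "inner (\<alpha> t) (normal \<alpha> t) = 0 \<longleftrightarrow> inner (\<alpha> t) T' = 0"
    using assms(3) by (simp add: normal_def T'_def sgn_div_norm inner_scaleR_right)
  ultimately show ?thesis
    using DERIV_unique by fastforce
qed

lemma cos_sin_combination_eq_cos_shift:
  fixes a b :: real
  obtains c t0 where "\<And>t. a * cos t + b * sin t = c * cos (t + t0)"
proof
  define z where "z = Complex a (- b)"
  fix t
  have "a = cmod z * cos (Arg z)" "b = - (cmod z * sin (Arg z))"
    using Re_rcis[of "cmod z" "Arg z"] Im_rcis[of "cmod z" "Arg z"]
    by (simp_all add: rcis_cmod_Arg z_def)
  then show "a * cos t + b * sin t = cmod z * cos (t + Arg z)"
    by (simp add: cos_add algebra_simps)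
qed

lemma harmonic_oscillator_solution:
  fixes w w' :: "real \<Rightarrow> real"
  assumes I: "open I" "connected I"
    and dw: "\<And>t. t \<in> I \<Longrightarrow> (w has_real_derivative w' t) (at t)"
    and dw': "\<And>t. t \<in> I \<Longrightarrow> (w' has_real_derivative - w t) (at t)"
  obtains c t0 where "\<And>t. t \<in> I \<Longrightarrow> w t = c * cos (t + t0)"
proof -
  \<comment> \<open>the coordinates of (w, w') in the frame rotating with t; both are conserved\<close>
  define P where "P t = w t * cos t - w' t * sin t" for t
  define Q where "Q t = w t * sin t + w' t * cos t" for t
  have "(P has_real_derivative 0) (at t)" "(Q has_real_derivative 0) (at t)" if "t \<in> I" for t
    unfolding P_def Q_def
    by (auto intro!: derivative_eq_intros dw dw' that simp: algebra_simps)
  then have "P constant_on I" "Q constant_on I"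
    using has_field_derivative_0_imp_constant_on I by blast+
  then obtain a b where ab: "\<And>t. t \<in> I \<Longrightarrow> P t = a \<and> Q t = b"
    unfolding constant_on_def by metis
  obtain c t0 where "\<And>t. a * cos t + b * sin t = c * cos (t + t0)"
    using cos_sin_combination_eq_cos_shift by blast
  moreover have "w t = a * cos t + b * sin t" if "t \<in> I" for t
  proof -
    have "a * cos t + b * sin t = P t * cos t + Q t * sin t"
      using ab[OF that] by simp
    also have "\<dots> = w t * ((sin t)\<^sup>2 + (cos t)\<^sup>2)"
      unfolding P_def Q_def power2_eq_square by algebra
    finally show ?thesis by simp
  qed
  ultimately show ?thesis using that by metis
qed

(* Since -r1/\<rho>^2 = (1/\<rho>)', the left side says (1/\<rho>)'' = -1/\<rho>. *)
lemma reciprocal_second_derivative_eq_minus_iff: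
  fixes \<rho> r1 :: "real \<Rightarrow> real"
  assumes pos: "\<rho> t > 0"
    and d0: "(\<rho> has_real_derivative r1 t) (at t)" and d1: "(r1 has_real_derivative r2) (at t)"
  shows "((\<lambda>s. - r1 s / (\<rho> s)\<^sup>2) has_real_derivative - (1 / \<rho> t)) (at t)
     \<longleftrightarrow> \<rho> t * r2 = (\<rho> t)\<^sup>2 + 2 * (r1 t)\<^sup>2"
proof -
  have D: "((\<lambda>s. - r1 s / (\<rho> s)\<^sup>2) has_real_derivative (2 * (r1 t)\<^sup>2 - \<rho> t * r2) / (\<rho> t)^3) (at t)"
    using pos by (auto intro!: derivative_eq_intros d0 d1 simp: field_simps power2_eq_square power3_eq_cube)
  have "(2 * (r1 t)\<^sup>2 - \<rho> t * r2) / (\<rho> t)^3 = - (1 / \<rho> t)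
      \<longleftrightarrow> \<rho> t * (\<rho> t * r2) = \<rho> t * ((\<rho> t)\<^sup>2 + 2 * (r1 t)\<^sup>2)"
    using pos by (auto simp: field_simps power2_eq_square power3_eq_cube)
  also have "\<dots> \<longleftrightarrow> \<rho> t * r2 = (\<rho> t)\<^sup>2 + 2 * (r1 t)\<^sup>2"
    using pos by simp
  finally show ?thesis
    using D DERIV_unique by auto
qed

lemma tangential_component_derivative_eq_speed_iff:
  fixes \<rho> r1 :: "real \<Rightarrow> real"
  assumes pos: "\<rho> t > 0"
    and d0: "(\<rho> has_real_derivative r1 t) (at t)" and d1: "(r1 has_real_derivative r2) (at t)"
  shows "((\<lambda>s. \<rho> s * r1 s / sqrt ((r1 s)\<^sup>2 + (\<rho> s)\<^sup>2)) has_real_derivative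
           sqrt ((r1 t)\<^sup>2 + (\<rho> t)\<^sup>2)) (at t)
     \<longleftrightarrow> \<rho> t * r2 = (\<rho> t)\<^sup>2 + 2 * (r1 t)\<^sup>2"
proof -
  define q where "q = (r1 t)\<^sup>2 + (\<rho> t)\<^sup>2"
  have q: "q > 0" using pos by (simp add: q_def add_nonneg_pos)
  then have S: "sqrt q > 0" "sqrt q * sqrt q = q" by simp_all
  have "((\<lambda>s. \<rho> s * r1 s / sqrt ((r1 s)\<^sup>2 + (\<rho> s)\<^sup>2)) has_real_derivative
      (((r1 t)\<^sup>2 + \<rho> t * r2) * sqrt q - \<rho> t * r1 t * (r1 t * r2 + \<rho> t * r1 t) / sqrt q) / q) (at t)"
    using q by (auto intro!: derivative_eq_intros d0 d1 simp flip: q_def)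
      (use S in \<open>simp add: field_simps power2_eq_square\<close>)
  moreover have "(((r1 t)\<^sup>2 + \<rho> t * r2) * sqrt q - \<rho> t * r1 t * (r1 t * r2 + \<rho> t * r1 t) / sqrt q) / q
      = sqrt q \<longleftrightarrow> (\<rho> t)\<^sup>2 * (\<rho> t * r2 - (\<rho> t)\<^sup>2 - 2 * (r1 t)\<^sup>2) = 0"
    using S by (simp add: field_simps) (simp add: q_def power2_eq_square power4_eq_xxxx algebra_simps)
  ultimately show ?thesis
    using pos DERIV_unique by (auto simp: q_def)
qed

lemma positive_solutions_of_rectifying_ode:
  fixes \<rho> r1 r2 :: "real \<Rightarrow> real"
  assumes I: "open I" "connected I" and pos: "\<forall>t\<in>I. \<rho> t > 0"
    and d0: "\<And>t. t \<in> I \<Longrightarrow> (\<rho> has_real_derivative r1 t) (at t)"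
    and d1: "\<And>t. t \<in> I \<Longrightarrow> (r1 has_real_derivative r2 t) (at t)"
  shows "(\<forall>t\<in>I. \<rho> t * r2 t = (\<rho> t)\<^sup>2 + 2 * (r1 t)\<^sup>2) \<longleftrightarrow>
         (\<exists>a t0. a \<noteq> 0 \<and> (\<forall>t\<in>I. \<rho> t = a / cos (t + t0)))"
proof -
  have ode_iff: "\<rho> t * r2 t = (\<rho> t)\<^sup>2 + 2 * (r1 t)\<^sup>2 \<longleftrightarrow>
      ((\<lambda>s. - r1 s / (\<rho> s)\<^sup>2) has_real_derivative - (1 / \<rho> t)) (at t)" if "t \<in> I" for t
    using reciprocal_second_derivative_eq_minus_iff[OF _ d0 d1] pos that by blast
  have dw: "((\<lambda>s. 1 / \<rho> s) has_real_derivative - r1 t / (\<rho> t)\<^sup>2) (at t)" if "t \<in> I" for t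
    using pos that by (auto intro!: derivative_eq_intros d0 simp: power2_eq_square)
  show ?thesis
  proof
    assume ode: "\<forall>t\<in>I. \<rho> t * r2 t = (\<rho> t)\<^sup>2 + 2 * (r1 t)\<^sup>2"
    show "\<exists>a t0. a \<noteq> 0 \<and> (\<forall>t\<in>I. \<rho> t = a / cos (t + t0))"
    proof (cases "I = {}")
      case False
      then obtain s where s: "s \<in> I" by blast
      have "((\<lambda>s. - r1 s / (\<rho> s)\<^sup>2) has_real_derivative - (1 / \<rho> t)) (at t)" if "t \<in> I" for t
        using ode ode_iff that by blast
      then obtain c t0 where c: "\<And>t. t \<in> I \<Longrightarrow> 1 / \<rho> t = c * cos (t + t0)"
        using harmonic_oscillator_solution[OF I dw] by blast
      have "c \<noteq> 0"
        using c[OF s] pos s by auto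
      moreover have "\<rho> t = 1 / c / cos (t + t0)" if "t \<in> I" for t
      proof -
        have "\<rho> t = 1 / (1 / \<rho> t)" by simp
        then show ?thesis using c[OF that] by simp
      qed
      ultimately show ?thesis by (intro exI[of _ "1 / c"] exI[of _ t0]) simp
    qed auto
  next
    assume "\<exists>a t0. a \<noteq> 0 \<and> (\<forall>t\<in>I. \<rho> t = a / cos (t + t0))"
    then obtain a t0 where a: "a \<noteq> 0" and \<rho>: "\<And>t. t \<in> I \<Longrightarrow> \<rho> t = a / cos (t + t0)"
      by blast
    have w: "1 / \<rho> t = cos (t + t0) / a" if "t \<in> I" for t
      using \<rho>[OF that] pos that a by auto
    have w': "- r1 t / (\<rho> t)\<^sup>2 = - sin (t + t0) / a" if "t \<in> I" for t
    proof (rule has_real_derivative_unique_on_open[OF I(1) that w dw[OF that]])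
      show "((\<lambda>s. cos (s + t0) / a) has_real_derivative - sin (t + t0) / a) (at t)"
        using a by (auto intro!: derivative_eq_intros)
    qed
    show "\<forall>t\<in>I. \<rho> t * r2 t = (\<rho> t)\<^sup>2 + 2 * (r1 t)\<^sup>2"
    proof
      fix t assume t: "t \<in> I"
      have "((\<lambda>s. - sin (s + t0) / a) has_real_derivative - (1 / \<rho> t)) (at t)"
        using w[OF t] a by (auto intro!: derivative_eq_intros)
      then have "((\<lambda>s. - r1 s / (\<rho> s)\<^sup>2) has_real_derivative - (1 / \<rho> t)) (at t)"
        by (rule has_field_derivative_transform_within_open[OF _ I(1) t]) (use w' in auto)
      then show "\<rho> t * r2 t = (\<rho> t)\<^sup>2 + 2 * (r1 t)\<^sup>2"
        using ode_iff[OF t] by blast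
    qed
  qed
qed

lemma rectifying_on_scaled_spherical_curve_iff:
  fixes \<rho> r1 r2 :: "real \<Rightarrow> real" and y y' :: "real \<Rightarrow> 'a::real_inner"
  assumes I: "open I" and pos: "\<forall>t\<in>I. \<rho> t > 0"
    and d0: "\<And>t. t \<in> I \<Longrightarrow> (\<rho> has_real_derivative r1 t) (at t)"
    and d1: "\<And>t. t \<in> I \<Longrightarrow> (r1 has_real_derivative r2 t) (at t)"
    and dy: "\<And>t. t \<in> I \<Longrightarrow> (y has_vector_derivative y' t) (at t)"
    and dy': "\<And>t. t \<in> I \<Longrightarrow> y' differentiable (at t)"
    and sphere: "\<forall>t\<in>I. inner (y t) (y t) = 1"
    and arclength: "\<forall>t\<in>I. norm (y' t) = 1"
    and curved: "\<forall>t\<in>I. vector_derivative (tangent (\<lambda>s. \<rho> s *\<^sub>R y s)) (at t) \<noteq> 0"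
  shows "rectifying_on I (\<lambda>s. \<rho> s *\<^sub>R y s) \<longleftrightarrow> (\<forall>t\<in>I. \<rho> t * r2 t = (\<rho> t)\<^sup>2 + 2 * (r1 t)\<^sup>2)"
proof -
  define \<alpha> where "\<alpha> = (\<lambda>s. \<rho> s *\<^sub>R y s)"
  define A where "A = (\<lambda>s. r1 s *\<^sub>R y s + \<rho> s *\<^sub>R y' s)"
  define v where "v = (\<lambda>s. sqrt ((r1 s)\<^sup>2 + (\<rho> s)\<^sup>2))"
  have orth: "inner (y t) (y' t) = 0" if "t \<in> I" for t
    using inner_derivative_eq_0_if_inner_self_constant[OF I that _ dy[OF that]] sphere by blast
  have d\<alpha>: "(\<alpha> has_vector_derivative A t) (at t)" if "t \<in> I" for t
    unfolding \<alpha>_def A_def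
    using has_vector_derivative_scaleR[OF d0[OF that] dy[OF that]] by (simp add: add.commute)
  have speed: "norm (A t) = v t" if "t \<in> I" for t
  proof -
    have "inner (y' t) (y' t) = 1"
      using arclength that by (simp flip: power2_norm_eq_inner)
    then have "inner (A t) (A t) = (r1 t)\<^sup>2 + (\<rho> t)\<^sup>2"
      using orth[OF that] sphere that
      by (simp add: A_def inner_add inner_commute power2_eq_square)
    then show ?thesis by (simp add: norm_eq_sqrt_inner v_def)
  qed
  have v_pos: "v t > 0" if "t \<in> I" for t
    using pos that by (auto simp: v_def intro!: add_nonneg_pos)
  have tangential: "inner (\<alpha> s) (tangent \<alpha> s) = \<rho> s * r1 s / v s" if "s \<in> I" for s
    using vector_derivative_at[OF d\<alpha>[OF that]] speed[OF that] orth[OF that] sphere that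
    by (simp add: tangent_def sgn_div_norm \<alpha>_def A_def inner_add_right divide_inverse_commute)
  have "inner (\<alpha> t) (normal \<alpha> t) = 0 \<longleftrightarrow> \<rho> t * r2 t = (\<rho> t)\<^sup>2 + 2 * (r1 t)\<^sup>2"
    if t: "t \<in> I" for t
  proof -
    have "A differentiable (at t)"
      unfolding A_def using t
      by (intro differentiable_add differentiable_scaleR dy' differentiableI_vector[OF dy]
          differentiableI[OF has_field_derivative_imp_has_derivative[OF d0]]
          differentiableI[OF has_field_derivative_imp_has_derivative[OF d1]])
    then have "tangent \<alpha> differentiable (at t)"
      using differentiable_tangent[OF I t d\<alpha>] speed v_pos t by fastforce
    then have "inner (\<alpha> t) (normal \<alpha> t) = 0 \<longleftrightarrow>
        ((\<lambda>s. inner (\<alpha> s) (tangent \<alpha> s)) has_real_derivative v t) (at t)"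
      using inner_normal_eq_0_iff[OF d\<alpha>[OF t]] speed[OF t] curved t unfolding \<alpha>_def by simp
    also have "\<dots> \<longleftrightarrow> ((\<lambda>s. \<rho> s * r1 s / v s) has_real_derivative v t) (at t)"
      using tangential eventually_nhds_in_open[OF I t] by (intro DERIV_cong_ev) (auto elim!: eventually_mono)
    also have "\<dots> \<longleftrightarrow> \<rho> t * r2 t = (\<rho> t)\<^sup>2 + 2 * (r1 t)\<^sup>2"
      unfolding v_def using tangential_component_derivative_eq_speed_iff pos d0 d1 t by blast
    finally show ?thesis .
  qed
  then show ?thesis
    unfolding rectifying_on_def \<alpha>_def by blast
qed

theorem theorem4p5:
  fixes I :: "real set" and \<rho> :: "real \<Rightarrow> real" and y :: "real \<Rightarrow> real ^ 'n"
  assumes I: "open I" "connected I"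
    and \<rho>_smooth: "smooth_on I \<rho>" and \<rho>_pos: "\<forall>t\<in>I. \<rho> t > 0"
    and y_smooth: "smooth_on I y"
    and y_sphere: "\<forall>t\<in>I. inner (y t) (y t) = 1"
    and y_arclength: "\<forall>t\<in>I. norm (vector_derivative y (at t)) = 1"
    and regular: "\<forall>t\<in>I. vector_derivative (\<lambda>s. \<rho> s *\<^sub>R y s) (at t) \<noteq> 0"
    and kappa_pos: "\<forall>t\<in>I. vector_derivative (tangent (\<lambda>s. \<rho> s *\<^sub>R y s)) (at t) \<noteq> 0"
  shows "rectifying_on I (\<lambda>s. \<rho> s *\<^sub>R y s) \<longleftrightarrow>
         (\<exists>a t0. a \<noteq> 0 \<and> (\<forall>t\<in>I. \<rho> t = a / cos (t + t0)))"
proof -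
  define \<rho>' where "\<rho>' = (\<lambda>t. vector_derivative \<rho> (at t))"
  define \<rho>'' where "\<rho>'' = (\<lambda>t. vector_derivative \<rho>' (at t))"
  define y' where "y' = (\<lambda>t. vector_derivative y (at t))"
  have d\<rho>: "(\<rho> has_real_derivative \<rho>' t) (at t)" if "t \<in> I" for t
    using smooth_on_has_vector_derivative[OF \<rho>_smooth that, of 0]
    by (simp add: \<rho>'_def has_real_derivative_iff_has_vector_derivative)
  have d\<rho>': "(\<rho>' has_real_derivative \<rho>'' t) (at t)" if "t \<in> I" for t
    using smooth_on_has_vector_derivative[OF \<rho>_smooth that, of 1]
    by (simp add: \<rho>'_def \<rho>''_def has_real_derivative_iff_has_vector_derivative)
  have dy: "(y has_vector_derivative y' t) (at t)" if "t \<in> I" for t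
    using smooth_on_has_vector_derivative[OF y_smooth that, of 0] by (simp add: y'_def)
  have dy': "y' differentiable (at t)" if "t \<in> I" for t
    using smooth_on_has_vector_derivative[OF y_smooth that, of 1]
    by (auto simp: y'_def intro: differentiableI_vector)
  have "rectifying_on I (\<lambda>s. \<rho> s *\<^sub>R y s) \<longleftrightarrow> (\<forall>t\<in>I. \<rho> t * \<rho>'' t = (\<rho> t)\<^sup>2 + 2 * (\<rho>' t)\<^sup>2)"
    using y_arclength kappa_pos
    by (intro rectifying_on_scaled_spherical_curve_iff[OF I(1) \<rho>_pos d\<rho> d\<rho>' dy dy' y_sphere])
      (simp_all add: y'_def)
  also have "\<dots> \<longleftrightarrow> (\<exists>a t0. a \<noteq> 0 \<and> (\<forall>t\<in>I. \<rho> t = a / cos (t + t0)))"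
    by (rule positive_solutions_of_rectifying_ode[OF I \<rho>_pos d\<rho> d\<rho>'])
  finally show ?thesis .
qed

end
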